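(* Let $G^\sigma$ be a connected oriented graph of order $n\geq 5$. Then $sr(G^\sigma)=2$ if and only if the underlying graph of $G^\sigma$ is a complete bipartite graph or a complete tripartite graph and every cycle of length $4$ in $G^\sigma$ is evenly-oriented.
   Context: An oriented graph $G^\sigma$ is a simple graph $G$ (underlying graph) together with an orientation of each edge. Its skew-adjacency matrix $S(G^\sigma)=(s_{ij})$ has $s_{ij}=1$ if there is an arc from $v_i$ to $v_j$, $s_{ij}=-1$ if there is an arc from $v_j$ to $v_i$, and $0$ otherwise; the skew-rank $sr(G^\sigma)$ is the rank of $S(G^\sigma)$. For an even cycle $u_1\cdots u_ku_1$, its sign is the sign of $\prod_{i=1}^k s_{u_iu_{i+1}}$ ($u_{k+1}=u_1$); the cycle is evenly-oriented if this sign is positive and oddly-oriented if negative. *)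

theory Defs
  imports "HOL-Analysis.Analysis"
begin

text \<open>An oriented graph on the finite vertex type 'n is given by its arc relation
  A: A u v means there is an arc from u to v.\<close>

definition oriented_graph :: "('n \<Rightarrow> 'n \<Rightarrow> bool) \<Rightarrow> bool" where
  "oriented_graph A \<longleftrightarrow> (\<forall>u. \<not> A u u) \<and> (\<forall>u v. A u v \<longrightarrow> \<not> A v u)"

definition underlying :: "('n \<Rightarrow> 'n \<Rightarrow> bool) \<Rightarrow> 'n \<Rightarrow> 'n \<Rightarrow> bool" where
  "underlying A u v \<longleftrightarrow> A u v \<or> A v u"

definition skew_entry :: "('n \<Rightarrow> 'n \<Rightarrow> bool) \<Rightarrow> 'n \<Rightarrow> 'n \<Rightarrow> real" where
  "skew_entry A u v = (if A u v then 1 else if A v u then -1 else 0)"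

definition skew_adj :: "('n::finite \<Rightarrow> 'n \<Rightarrow> bool) \<Rightarrow> real^'n^'n" where
  "skew_adj A = (\<chi> i j. skew_entry A i j)"

definition skew_rank :: "('n::finite \<Rightarrow> 'n \<Rightarrow> bool) \<Rightarrow> nat" where
  "skew_rank A = rank (skew_adj A)"

definition connected_graph :: "('n \<Rightarrow> 'n \<Rightarrow> bool) \<Rightarrow> bool" where
  "connected_graph E \<longleftrightarrow> (\<forall>u v. E\<^sup>*\<^sup>* u v)"

definition complete_multipartite :: "nat \<Rightarrow> ('n \<Rightarrow> 'n \<Rightarrow> bool) \<Rightarrow> bool" where
  "complete_multipartite k E \<longleftrightarrow>
     (\<exists>c :: 'n \<Rightarrow> nat. range c = {0..<k} \<and> (\<forall>u v. E u v \<longleftrightarrow> c u \<noteq> c v))"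

abbreviation complete_bipartite :: "('n \<Rightarrow> 'n \<Rightarrow> bool) \<Rightarrow> bool" where
  "complete_bipartite E \<equiv> complete_multipartite 2 E"

abbreviation complete_tripartite :: "('n \<Rightarrow> 'n \<Rightarrow> bool) \<Rightarrow> bool" where
  "complete_tripartite E \<equiv> complete_multipartite 3 E"

definition is_4cycle :: "('n \<Rightarrow> 'n \<Rightarrow> bool) \<Rightarrow> 'n \<Rightarrow> 'n \<Rightarrow> 'n \<Rightarrow> 'n \<Rightarrow> bool" where
  "is_4cycle A u1 u2 u3 u4 \<longleftrightarrow> distinct [u1, u2, u3, u4] \<and>
     underlying A u1 u2 \<and> underlying A u2 u3 \<and> underlying A u3 u4 \<and> underlying A u4 u1"

definition evenly_oriented_4cycle :: "('n \<Rightarrow> 'n \<Rightarrow> bool) \<Rightarrow> 'n \<Rightarrow> 'n \<Rightarrow> 'n \<Rightarrow> 'n \<Rightarrow> bool" where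
  "evenly_oriented_4cycle A u1 u2 u3 u4 \<longleftrightarrow>
     skew_entry A u1 u2 * skew_entry A u2 u3 * skew_entry A u3 u4 * skew_entry A u4 u1 > 0"

end

theory Submission
  imports Defs
begin

text \<open>Let \<open>S\<close> be the skew-adjacency matrix and \<open>s\<^sub>a\<^sub>b \<noteq> 0\<close>. Rows \<open>a\<close> and \<open>b\<close> of \<open>S\<close> are
  independent, so \<open>rank S = 2\<close> iff every row lies in their span, which by skew-symmetry is the
  vanishing of all Pfaffians \<open>s\<^sub>i\<^sub>j s\<^sub>a\<^sub>b - s\<^sub>i\<^sub>a s\<^sub>j\<^sub>b + s\<^sub>i\<^sub>b s\<^sub>j\<^sub>a\<close>.
  For entries in \<open>{-1, 0, 1}\<close> these conditions say precisely that non-adjacency is transitive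
  (the underlying graph is complete multipartite), that there is no \<open>K\<^sub>4\<close> (its Pfaffian is a
  sum of three terms \<open>\<plusminus>1\<close>), and that every 4-cycle is evenly oriented. A complete
  multipartite graph with an edge and without \<open>K\<^sub>4\<close> has two or three parts.\<close>

definition pfaffian4 :: "('n \<Rightarrow> 'n \<Rightarrow> real) \<Rightarrow> 'n \<Rightarrow> 'n \<Rightarrow> 'n \<Rightarrow> 'n \<Rightarrow> real" where
  "pfaffian4 s i j k l = s i j * s k l - s i k * s j l + s i l * s j k"

lemma pfaffian4_swap:
  assumes skew: "\<And>u v. s u v = - s v u"
  shows "pfaffian4 s j i k l = - pfaffian4 s i j k l"
    and "pfaffian4 s i k j l = - pfaffian4 s i j k l"
    and "pfaffian4 s i j l k = - pfaffian4 s i j k l"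
    and "pfaffian4 s k l i j = pfaffian4 s i j k l"
  using skew[of j i] skew[of k j] skew[of l k] skew[of k i] skew[of l j] skew[of l i]
  by (simp_all add: pfaffian4_def algebra_simps)

lemma skew_rows_independent:
  fixes M :: "real^'n^'n"
  assumes skew: "\<And>i j. M$i$j = - M$j$i" and ab: "M$a$b \<noteq> 0"
  shows "independent {row a M, row b M}" and "row a M \<noteq> row b M"
proof -
  have diag: "M$a$a = 0" "M$b$b = 0" using skew[of a a] skew[of b b] by simp_all
  have ba: "M$b$a \<noteq> 0" using skew[of b a] ab by simp
  show ne: "row a M \<noteq> row b M"
  proof
    assume "row a M = row b M"
    then have "row a M $ a = row b M $ a" by simp
    then show False using diag ba by (simp add: row_def)
  qed
  have "row a M \<notin> span {row b M}"
  proof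
    assume "row a M \<in> span {row b M}"
    then obtain k where k: "row a M = k *\<^sub>R row b M" by (auto simp: span_singleton)
    then have "row a M $ a = k * row b M $ a" by simp
    then have "k = 0" using diag ba by (simp add: row_def)
    then have "row a M $ b = 0" using k by simp
    then show False using ab by (simp add: row_def)
  qed
  moreover have "row b M \<noteq> 0"
  proof
    assume "row b M = 0"
    then have "row b M $ a = 0" by simp
    then show False using ba by (simp add: row_def)
  qed
  ultimately show "independent {row a M, row b M}"
    using ne by (simp add: independent_insert)
qed

lemma row_in_span_iff_pfaffian4:
  fixes M :: "real^'n^'n"
  assumes skew: "\<And>i j. M$i$j = - M$j$i" and ab: "M$a$b \<noteq> 0"
  shows "row i M \<in> span {row a M, row b M} \<longleftrightarrow>
    (\<forall>j. pfaffian4 (\<lambda>u v. M$u$v) i j a b = 0)"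
proof
  assume "row i M \<in> span {row a M, row b M}"
  then obtain \<alpha> \<beta> where comb_row: "row i M = \<alpha> *\<^sub>R row a M + \<beta> *\<^sub>R row b M"
    by (auto simp: span_insert span_singleton algebra_simps)
  have comb: "M$i$k = \<alpha> * M$a$k + \<beta> * M$b$k" for k
  proof -
    have "row i M $ k = (\<alpha> *\<^sub>R row a M + \<beta> *\<^sub>R row b M) $ k" using comb_row by simp
    then show ?thesis by (simp add: row_def)
  qed
  have ia: "M$i$a = \<beta> * M$b$a" and ib: "M$i$b = \<alpha> * M$a$b"
    using comb[of a] comb[of b] skew[of a a] skew[of b b] by simp_all
  show "\<forall>j. pfaffian4 (\<lambda>u v. M$u$v) i j a b = 0"
  proof
    fix j
    have "M$b$a = - M$a$b" "M$j$a = - M$a$j" "M$j$b = - M$b$j" by (rule skew)+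
    then show "pfaffian4 (\<lambda>u v. M$u$v) i j a b = 0"
      unfolding pfaffian4_def comb[of j] ia ib by (simp add: algebra_simps)
  qed
next
  assume pf: "\<forall>j. pfaffian4 (\<lambda>u v. M$u$v) i j a b = 0"
  have "row i M = (M$i$b / M$a$b) *\<^sub>R row a M + (- M$i$a / M$a$b) *\<^sub>R row b M"
  proof (rule iffD2[OF vec_eq_iff], rule allI)
    fix j
    have "M$i$j * M$a$b = M$i$b * M$a$j - M$i$a * M$b$j"
      using pf[rule_format, of j] skew[of j a] skew[of j b]
      by (simp add: pfaffian4_def algebra_simps)
    then show "row i M $ j = ((M$i$b / M$a$b) *\<^sub>R row a M + (- M$i$a / M$a$b) *\<^sub>R row b M) $ j"
      using ab by (simp add: row_def field_simps)
  qed
  moreover have "row a M \<in> span {row a M, row b M}" "row b M \<in> span {row a M, row b M}"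
    by (auto intro: span_base)
  ultimately show "row i M \<in> span {row a M, row b M}"
    by (metis span_add span_scale)
qed

lemma rank_skew_eq_2_iff_rows_in_span:
  fixes M :: "real^'n^'n"
  assumes skew: "\<And>i j. M$i$j = - M$j$i" and ab: "M$a$b \<noteq> 0"
  shows "rank M = 2 \<longleftrightarrow> (\<forall>i. row i M \<in> span {row a M, row b M})"
proof
  assume rank: "rank M = 2"
  show "\<forall>i. row i M \<in> span {row a M, row b M}"
  proof (rule allI, rule ccontr)
    fix i assume out: "row i M \<notin> span {row a M, row b M}"
    have "row a M \<in> span {row a M, row b M}" "row b M \<in> span {row a M, row b M}"
      by (auto intro: span_base)
    then have "row i M \<notin> {row a M, row b M}"
      using out by auto
    then have "card (insert (row i M) {row a M, row b M}) = 3"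
      using skew_rows_independent(2)[OF skew ab] by simp
    moreover have "independent (insert (row i M) {row a M, row b M})"
      using out skew_rows_independent(1)[OF skew ab] by (rule independent_insertI)
    moreover have "insert (row i M) {row a M, row b M} \<subseteq> rows M"
      by (auto simp: rows_def)
    ultimately have "3 \<le> dim (rows M)"
      by (metis independent_card_le_dim)
    then show False
      using rank by (simp add: row_rank_def)
  qed
next
  assume "\<forall>i. row i M \<in> span {row a M, row b M}"
  then have "rows M \<subseteq> span {row a M, row b M}"
    by (auto simp: rows_def)
  moreover have "{row a M, row b M} \<subseteq> rows M"
    by (auto simp: rows_def)
  moreover have "card {row a M, row b M} = 2"
    using skew_rows_independent(2)[OF skew ab] by simp
  ultimately have "dim (rows M) = 2"
    using skew_rows_independent(1)[OF skew ab] by (metis dim_unique)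
  then show "rank M = 2"
    by (simp add: row_rank_def)
qed

lemma rank_skew_eq_2_iff_pfaffian4:
  fixes M :: "real^'n^'n"
  assumes "\<And>i j. M$i$j = - M$j$i" and "M$a$b \<noteq> 0"
  shows "rank M = 2 \<longleftrightarrow> (\<forall>i j. pfaffian4 (\<lambda>u v. M$u$v) i j a b = 0)"
  using rank_skew_eq_2_iff_rows_in_span[OF assms] row_in_span_iff_pfaffian4[OF assms] by blast

lemma unit_mult: "(x::real) \<in> {-1, 1} \<Longrightarrow> y \<in> {-1, 1} \<Longrightarrow> x * y \<in> {-1, 1}"
  by auto

lemma unit_mult_pos_iff: "(x::real) \<in> {-1, 1} \<Longrightarrow> y \<in> {-1, 1} \<Longrightarrow> 0 < x * y \<longleftrightarrow> x = y"
  by auto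

lemma unit_alternating_sum_ne_0:
  "(x::real) \<in> {-1, 1} \<Longrightarrow> y \<in> {-1, 1} \<Longrightarrow> z \<in> {-1, 1} \<Longrightarrow> x - y + z \<noteq> 0"
  by auto

lemma unit_diff_in_sign_range:
  "(x::real) \<in> {-1, 1} \<Longrightarrow> y \<in> {-1, 1} \<Longrightarrow> x - y \<in> {-1, 0, 1} \<Longrightarrow> x = y"
  by auto

lemma skew_entry_antisym: "oriented_graph A \<Longrightarrow> skew_entry A u v = - skew_entry A v u"
  by (auto simp: skew_entry_def oriented_graph_def)

lemma skew_entry_eq_0_iff: "skew_entry A u v = 0 \<longleftrightarrow> \<not> underlying A u v"
  by (auto simp: skew_entry_def underlying_def)

lemma skew_entry_unit: "underlying A u v \<Longrightarrow> skew_entry A u v \<in> {-1, 1}"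
  by (auto simp: skew_entry_def underlying_def)

lemma skew_entry_range: "skew_entry A u v \<in> {-1, 0, 1}"
  by (auto simp: skew_entry_def)

lemma underlying_sym: "underlying A u v \<longleftrightarrow> underlying A v u"
  by (auto simp: underlying_def)

lemma underlying_irrefl: "oriented_graph A \<Longrightarrow> \<not> underlying A u u"
  by (auto simp: underlying_def oriented_graph_def)

lemma skew_rank_eq_2_iff_pfaffian4:
  assumes "oriented_graph A" and "underlying A a b"
  shows "skew_rank A = 2 \<longleftrightarrow> (\<forall>i j. pfaffian4 (skew_entry A) i j a b = 0)"
proof -
  have entry: "skew_adj A $ u $ v = skew_entry A u v" for u v
    by (simp add: skew_adj_def)
  then have entries: "(\<lambda>u v. skew_adj A $ u $ v) = skew_entry A"
    by simp
  have "\<And>i j. skew_adj A $ i $ j = - skew_adj A $ j $ i"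
    unfolding entry by (rule skew_entry_antisym[OF assms(1)])
  moreover have "skew_adj A $ a $ b \<noteq> 0"
    using assms(2) by (simp add: entry skew_entry_eq_0_iff)
  ultimately show ?thesis
    unfolding skew_rank_def entries[symmetric] by (rule rank_skew_eq_2_iff_pfaffian4)
qed

definition nonadjacency_transitive :: "('n \<Rightarrow> 'n \<Rightarrow> bool) \<Rightarrow> bool" where
  "nonadjacency_transitive E \<longleftrightarrow> (\<forall>u v w. \<not> E u v \<longrightarrow> \<not> E v w \<longrightarrow> \<not> E u w)"

definition K4_free :: "('n \<Rightarrow> 'n \<Rightarrow> bool) \<Rightarrow> bool" where
  "K4_free E \<longleftrightarrow> (\<nexists>a b c d. E a b \<and> E a c \<and> E a d \<and> E b c \<and> E b d \<and> E c d)"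

lemma evenly_oriented_4cycle_iff:
  assumes "is_4cycle A u1 u2 u3 u4"
  shows "evenly_oriented_4cycle A u1 u2 u3 u4 \<longleftrightarrow>
    skew_entry A u1 u2 * skew_entry A u3 u4 = skew_entry A u2 u3 * skew_entry A u4 u1"
proof -
  let ?s = "skew_entry A"
  have "?s u1 u2 \<in> {-1, 1}" "?s u2 u3 \<in> {-1, 1}" "?s u3 u4 \<in> {-1, 1}" "?s u4 u1 \<in> {-1, 1}"
    using assms by (auto intro!: skew_entry_unit simp: is_4cycle_def simp del: insert_iff)
  then have "0 < (?s u1 u2 * ?s u3 u4) * (?s u2 u3 * ?s u4 u1) \<longleftrightarrow>
      ?s u1 u2 * ?s u3 u4 = ?s u2 u3 * ?s u4 u1"
    by (intro unit_mult_pos_iff unit_mult)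
  then show ?thesis
    by (simp add: evenly_oriented_4cycle_def mult_ac)
qed

lemma skew_rank_2_nonadjacency_transitive:
  assumes A: "oriented_graph A" and rank: "skew_rank A = 2"
    and no_isolated: "\<And>v. \<exists>w. underlying A v w"
  shows "nonadjacency_transitive (underlying A)"
  unfolding nonadjacency_transitive_def
proof (intro allI impI notI)
  fix u v w
  assume "\<not> underlying A u v" "\<not> underlying A v w" and uw: "underlying A u w"
  then have "skew_entry A v u = 0" "skew_entry A v w = 0"
    by (simp_all add: skew_entry_eq_0_iff underlying_sym)
  moreover obtain j where vj: "underlying A v j"
    using no_isolated by blast
  moreover have "pfaffian4 (skew_entry A) v j u w = 0"
    using rank skew_rank_eq_2_iff_pfaffian4[OF A uw] by blast
  ultimately have "skew_entry A v j * skew_entry A u w = 0"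
    by (simp add: pfaffian4_def)
  then show False
    using vj uw by (simp add: skew_entry_eq_0_iff)
qed

lemma skew_rank_2_K4_free:
  assumes A: "oriented_graph A" and rank: "skew_rank A = 2"
  shows "K4_free (underlying A)"
  unfolding K4_free_def
proof
  assume "\<exists>a b c d. underlying A a b \<and> underlying A a c \<and> underlying A a d \<and>
    underlying A b c \<and> underlying A b d \<and> underlying A c d"
  then obtain a b c d where K4: "underlying A a b" "underlying A a c" "underlying A a d"
    "underlying A b c" "underlying A b d" "underlying A c d"
    by blast
  have pf: "pfaffian4 (skew_entry A) c d a b = 0"
    using rank skew_rank_eq_2_iff_pfaffian4[OF A K4(1)] by blast
  have "skew_entry A c d \<in> {-1, 1}" "skew_entry A a b \<in> {-1, 1}"
    "skew_entry A c a \<in> {-1, 1}" "skew_entry A d b \<in> {-1, 1}"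
    "skew_entry A c b \<in> {-1, 1}" "skew_entry A d a \<in> {-1, 1}"
    using K4 by (auto intro!: skew_entry_unit simp: underlying_sym simp del: insert_iff)
  then have "pfaffian4 (skew_entry A) c d a b \<noteq> 0"
    unfolding pfaffian4_def by (intro unit_alternating_sum_ne_0 unit_mult)
  with pf show False
    by simp
qed

lemma skew_rank_2_evenly_oriented_4cycle:
  assumes A: "oriented_graph A" and rank: "skew_rank A = 2"
    and cycle: "is_4cycle A u1 u2 u3 u4"
  shows "evenly_oriented_4cycle A u1 u2 u3 u4"
proof -
  let ?s = "skew_entry A"
  have units: "?s u1 u2 \<in> {-1, 1}" "?s u2 u3 \<in> {-1, 1}" "?s u3 u4 \<in> {-1, 1}" "?s u4 u1 \<in> {-1, 1}"
    using cycle by (auto intro!: skew_entry_unit simp: is_4cycle_def simp del: insert_iff)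
  have "underlying A u1 u2"
    using cycle by (simp add: is_4cycle_def)
  then have "pfaffian4 ?s u3 u4 u1 u2 = 0"
    using rank skew_rank_eq_2_iff_pfaffian4[OF A] by blast
  then have "?s u1 u2 * ?s u3 u4 - ?s u2 u3 * ?s u4 u1 = ?s u3 u1 * ?s u4 u2"
    using skew_entry_antisym[OF A, of u3 u2] by (simp add: pfaffian4_def algebra_simps)
  moreover have "?s u3 u1 * ?s u4 u2 \<in> {-1, 0, 1}"
    using skew_entry_range[of A u3 u1] skew_entry_range[of A u4 u2] by auto
  ultimately have "?s u1 u2 * ?s u3 u4 - ?s u2 u3 * ?s u4 u1 \<in> {-1, 0, 1}"
    by simp
  then have "?s u1 u2 * ?s u3 u4 = ?s u2 u3 * ?s u4 u1"
    using units by (intro unit_diff_in_sign_range unit_mult)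
  then show ?thesis
    using evenly_oriented_4cycle_iff[OF cycle] by blast
qed

lemma pfaffian4_eq_0_if_nonadjacent:
  assumes A: "oriented_graph A" and trans: "nonadjacency_transitive (underlying A)"
    and even: "\<forall>u1 u2 u3 u4. is_4cycle A u1 u2 u3 u4 \<longrightarrow> evenly_oriented_4cycle A u1 u2 u3 u4"
    and xy: "\<not> underlying A x y"
  shows "pfaffian4 (skew_entry A) x y z w = 0"
proof -
  let ?E = "underlying A" and ?s = "skew_entry A"
  have pf: "pfaffian4 ?s x y z w = ?s x w * ?s y z - ?s x z * ?s y w"
    using xy by (simp add: pfaffian4_def skew_entry_eq_0_iff)
  have yx: "\<not> ?E y x"
    using xy by (simp add: underlying_sym)
  have same_part: "\<not> ?E x v \<longleftrightarrow> \<not> ?E y v" for v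
    using trans xy yx unfolding nonadjacency_transitive_def by blast
  \<comment> \<open>\<open>x\<close> and \<open>y\<close> lie in one part: either \<open>z\<close> or \<open>w\<close> lies there too, or \<open>x z y w\<close> is a 4-cycle\<close>
  consider "\<not> ?E x z" | "\<not> ?E x w" | "?E x z" "?E x w"
    by blast
  then show ?thesis
  proof cases
    case 1
    then have "?s x z = 0" "?s y z = 0"
      using same_part[of z] by (simp_all add: skew_entry_eq_0_iff)
    then show ?thesis using pf by simp
  next
    case 2
    then have "?s x w = 0" "?s y w = 0"
      using same_part[of w] by (simp_all add: skew_entry_eq_0_iff)
    then show ?thesis using pf by simp
  next
    case 3
    then have "?E y z" "?E y w" "?E w x"
      using same_part[of z] same_part[of w] underlying_sym[of A w x] by simp_all
    then have "?E z y"
      using underlying_sym[of A z y] by simp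
    show ?thesis
    proof (cases "x = y \<or> z = w")
      case True
      then show ?thesis using pf by auto
    next
      case False
      then have cycle: "is_4cycle A x z y w"
        using 3 \<open>?E z y\<close> \<open>?E y w\<close> \<open>?E w x\<close> underlying_irrefl[OF A]
        by (auto simp: is_4cycle_def)
      then have "evenly_oriented_4cycle A x z y w"
        using even by blast
      then have "?s x z * ?s y w = ?s z y * ?s w x"
        using evenly_oriented_4cycle_iff[OF cycle] by blast
      then show ?thesis
        using pf skew_entry_antisym[OF A, of z y] skew_entry_antisym[OF A, of w x] by simp
    qed
  qed
qed

lemma pfaffian4_eq_0:
  assumes A: "oriented_graph A" and trans: "nonadjacency_transitive (underlying A)"
    and K4: "K4_free (underlying A)"
    and even: "\<forall>u1 u2 u3 u4. is_4cycle A u1 u2 u3 u4 \<longrightarrow> evenly_oriented_4cycle A u1 u2 u3 u4"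
  shows "pfaffian4 (skew_entry A) i j k l = 0"
proof -
  let ?E = "underlying A"
  note swap = pfaffian4_swap[of "skew_entry A", OF skew_entry_antisym[OF A]]
  note zero = pfaffian4_eq_0_if_nonadjacent[OF A trans even]
  \<comment> \<open>the Pfaffian is alternating, so the non-adjacent pair can be moved to the front\<close>
  from K4 consider "\<not> ?E i j" | "\<not> ?E i k" | "\<not> ?E i l" | "\<not> ?E j k" | "\<not> ?E j l" | "\<not> ?E k l"
    unfolding K4_free_def by blast
  then show ?thesis
  proof cases
    case 1
    then show ?thesis by (rule zero)
  next
    case 2
    show ?thesis
      using zero[OF 2, where z = j and w = l] swap(2)[of i j k l] by linarith
  next
    case 3
    show ?thesis
      using zero[OF 3, where z = j and w = k] swap(2)[of i j l k] swap(3)[of i j k l] by linarith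
  next
    case 4
    show ?thesis
      using zero[OF 4, where z = i and w = l] swap(2)[of j i k l] swap(1)[of i j k l] by linarith
  next
    case 5
    show ?thesis
      using zero[OF 5, where z = i and w = k] swap(2)[of j i l k] swap(3)[of j i k l] swap(1)[of i j k l]
      by linarith
  next
    case 6
    show ?thesis
      using zero[OF 6, where z = i and w = j] swap(4)[of k l i j] by linarith
  qed
qed

lemma skew_rank_eq_2_iff:
  assumes A: "oriented_graph A" and ab: "underlying A a b"
    and no_isolated: "\<And>v. \<exists>w. underlying A v w"
  shows "skew_rank A = 2 \<longleftrightarrow>
    nonadjacency_transitive (underlying A) \<and> K4_free (underlying A) \<and>
    (\<forall>u1 u2 u3 u4. is_4cycle A u1 u2 u3 u4 \<longrightarrow> evenly_oriented_4cycle A u1 u2 u3 u4)"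
proof (intro iffI conjI allI impI; (elim conjE)?)
  assume rank: "skew_rank A = 2"
  show "nonadjacency_transitive (underlying A)"
    using A rank no_isolated by (rule skew_rank_2_nonadjacency_transitive)
  show "K4_free (underlying A)"
    using A rank by (rule skew_rank_2_K4_free)
  show "evenly_oriented_4cycle A u1 u2 u3 u4" if "is_4cycle A u1 u2 u3 u4" for u1 u2 u3 u4
    using A rank that by (rule skew_rank_2_evenly_oriented_4cycle)
next
  assume "nonadjacency_transitive (underlying A)" "K4_free (underlying A)"
    "\<forall>u1 u2 u3 u4. is_4cycle A u1 u2 u3 u4 \<longrightarrow> evenly_oriented_4cycle A u1 u2 u3 u4"
  then show "skew_rank A = 2"
    using pfaffian4_eq_0[OF A] skew_rank_eq_2_iff_pfaffian4[OF A ab] by simp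
qed

lemma complete_multipartite_nonadjacency_transitive:
  "complete_multipartite k E \<Longrightarrow> nonadjacency_transitive E"
  by (auto simp: complete_multipartite_def nonadjacency_transitive_def)

lemma complete_multipartite_K4_free:
  assumes "complete_multipartite k E" and "k \<le> 3"
  shows "K4_free E"
proof -
  obtain c :: "'a \<Rightarrow> nat" where range: "range c = {0..<k}" and adj: "\<And>u v. E u v \<longleftrightarrow> c u \<noteq> c v"
    using assms(1) unfolding complete_multipartite_def by blast
  have bound: "c u < 3" for u
    using range assms(2) rangeI[of c u] by auto
  show ?thesis
    unfolding K4_free_def adj
  proof clarify
    fix p q r s
    assume "c p \<noteq> c q" "c p \<noteq> c r" "c p \<noteq> c s" "c q \<noteq> c r" "c q \<noteq> c s" "c r \<noteq> c s"
    then show False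
      using bound[of p] bound[of q] bound[of r] bound[of s] by arith
  qed
qed

lemma complete_bipartite_or_tripartite_if:
  assumes sym: "symp E" and irrefl: "irreflp E"
    and trans: "nonadjacency_transitive E" and K4: "K4_free E" and ab: "E a b"
  shows "complete_bipartite E \<or> complete_tripartite E"
proof -
  define c :: "'a \<Rightarrow> nat" where "c u = (if \<not> E a u then 0 else if \<not> E b u then 1 else 2)" for u
  have same_part: "\<not> E p u \<Longrightarrow> \<not> E p v \<Longrightarrow> \<not> E u v" for p u v
    using trans sym unfolding nonadjacency_transitive_def by (metis sympD)
  have other_part: "\<not> E p u \<Longrightarrow> E p v \<Longrightarrow> E u v" for p u v
    using trans unfolding nonadjacency_transitive_def by blast
  have third_part: "E a u \<Longrightarrow> E a v \<Longrightarrow> E b u \<Longrightarrow> E b v \<Longrightarrow> \<not> E u v" for u v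
    using K4 ab unfolding K4_free_def by blast
  have adj: "E u v \<longleftrightarrow> c u \<noteq> c v" for u v
    using same_part[of a u v] same_part[of b u v] other_part[of a u v] other_part[of a v u]
      other_part[of b u v] other_part[of b v u] third_part[of u v] sym
    unfolding c_def by (auto dest: sympD)
  have "c a = 0" "c b = 1"
    using irrefl ab by (simp_all add: c_def irreflpD)
  then have "range c = {0..<2} \<or> range c = {0..<3}"
    by (auto simp: c_def image_iff split: if_splits)
  then show ?thesis
    using adj unfolding complete_multipartite_def by blast
qed

lemma complete_bipartite_or_tripartite_iff:
  assumes "symp E" and "irreflp E" and "E a b"
  shows "complete_bipartite E \<or> complete_tripartite E \<longleftrightarrow> nonadjacency_transitive E \<and> K4_free E"
proof
  assume "complete_bipartite E \<or> complete_tripartite E"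
  then obtain k where "complete_multipartite k E" and "k \<le> 3"
    by auto
  then show "nonadjacency_transitive E \<and> K4_free E"
    using complete_multipartite_nonadjacency_transitive complete_multipartite_K4_free by blast
next
  assume "nonadjacency_transitive E \<and> K4_free E"
  then show "complete_bipartite E \<or> complete_tripartite E"
    using complete_bipartite_or_tripartite_if[OF assms(1,2) _ _ assms(3)] by blast
qed

lemma connected_graph_has_neighbour:
  assumes "connected_graph E" and "2 \<le> CARD('n::finite)"
  shows "\<exists>w. E (v :: 'n) w"
proof -
  obtain u :: 'n where "u \<noteq> v"
    using assms(2) by (metis card_2_iff' ex_card one_le_numeral order.trans)
  moreover have "E\<^sup>*\<^sup>* v u"
    using assms(1) by (simp add: connected_graph_def)
  ultimately show ?thesis
    by (metis converse_rtranclpE)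
qed

theorem theorem3p3:
  fixes A :: "'n::finite \<Rightarrow> 'n \<Rightarrow> bool"
  assumes "oriented_graph A"
    and "connected_graph (underlying A)"
    and "CARD('n) \<ge> 5"
  shows "skew_rank A = 2 \<longleftrightarrow>
           ((complete_bipartite (underlying A) \<or> complete_tripartite (underlying A)) \<and>
            (\<forall>u1 u2 u3 u4. is_4cycle A u1 u2 u3 u4 \<longrightarrow> evenly_oriented_4cycle A u1 u2 u3 u4))"
proof -
  \<comment> \<open>of \<open>CARD('n) \<ge> 5\<close> only \<open>CARD('n) \<ge> 2\<close> is needed, to have an edge\<close>
  have no_isolated: "\<exists>w. underlying A v w" for v
    using connected_graph_has_neighbour assms(2,3) by fastforce
  then obtain a b where ab: "underlying A a b"
    by blast
  have "symp (underlying A)"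
    by (rule sympI) (simp add: underlying_sym)
  moreover have "irreflp (underlying A)"
    by (rule irreflpI) (rule underlying_irrefl[OF assms(1)])
  ultimately have "complete_bipartite (underlying A) \<or> complete_tripartite (underlying A) \<longleftrightarrow>
      nonadjacency_transitive (underlying A) \<and> K4_free (underlying A)"
    using ab by (rule complete_bipartite_or_tripartite_iff)
  then show ?thesis
    unfolding skew_rank_eq_2_iff[OF assms(1) ab no_isolated] by blast
qed

end
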